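(* Let $n,g,k,t$ be positive integers with $t\le k$. If there exist an orthogonal array OA$(t,k,g)$ and a large set with multiplicity LS$(t,k,n;g^{k-t})$, then there exists a large set of H-designs LH$(n,g,k,t)$.
   Context: A Steiner system S$(t,k,n)$ is a pair $(Q,B)$ where $Q$ is an $n$-set and $B$ is a collection of $k$-subsets (blocks) of $Q$ such that every $t$-subset of $Q$ is contained in exactly one block. A large set with multiplicity $\mu$, LS$(t,k,n;\mu)$, is a family (the same system may occur more than once) of Steiner systems S$(t,k,n)$ on a common $n$-set $Q$ such that every $k$-subset of $Q$ is a block of exactly $\mu$ of the systems. An orthogonal array OA$(t,k,g)$ is a $g^t\times k$ matrix with entries from $\mathbb{Z}_g$ such that in the submatrix formed by any $t$ columns each ordered $t$-tuple over $\mathbb{Z}_g$ occurs exactly once as a row. An H-design H$(n,g,k,t)$ is a triple $(Q,G,B)$ where $Q$ is a set of $ng$ points, $G$ is a partition of $Q$ into $n$ groups of size $g$, and $B$ is a set of $k$-subsets of $Q$ (blocks) such that each block meets each group in at most one point and any $t$ points from $t$ distinct groups lie in exactly one block. A large set of H-designs LH$(n,g,k,t)$ is a partition of the set of all $k$-subsets of $Q$ meeting each group in at most one point into pairwise disjoint block sets, each forming an H-design H$(n,g,k,t)$ with the same $Q$ and $G$. *)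

theory Defs
  imports Main "HOL-Library.Disjoint_Sets"
begin

definition steiner_system :: "nat \<Rightarrow> nat \<Rightarrow> nat \<Rightarrow> 'a set \<Rightarrow> 'a set set \<Rightarrow> bool" where
  "steiner_system t k n Q B \<longleftrightarrow>
     finite Q \<and> card Q = n \<and>
     (\<forall>b\<in>B. b \<subseteq> Q \<and> card b = k) \<and>
     (\<forall>T. T \<subseteq> Q \<and> card T = t \<longrightarrow> (\<exists>!b. b \<in> B \<and> T \<subseteq> b))"

text \<open>Large set with multiplicity mu, LS(t,k,n;mu): a family (list, repetitions allowed)
  of Steiner systems S(t,k,n) on the common n-set Q such that every k-subset of Q
  is a block of exactly mu members of the family.\<close>
definition large_set_mult :: "nat \<Rightarrow> nat \<Rightarrow> nat \<Rightarrow> nat \<Rightarrow> 'a set \<Rightarrow> 'a set set list \<Rightarrow> bool" where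
  "large_set_mult t k n mu Q Bs \<longleftrightarrow>
     finite Q \<and> card Q = n \<and>
     (\<forall>i<length Bs. steiner_system t k n Q (Bs ! i)) \<and>
     (\<forall>K. K \<subseteq> Q \<and> card K = k \<longrightarrow> card {i. i < length Bs \<and> K \<in> Bs ! i} = mu)"

text \<open>Orthogonal array OA(t,k,g): a g^t x k matrix M (rows i < g^t, columns j < k)
  with entries in Z_g = {0..<g}, such that for any t columns C and any assignment f of
  symbols to these columns (an ordered t-tuple) exactly one row realises f.\<close>
definition orthogonal_array :: "nat \<Rightarrow> nat \<Rightarrow> nat \<Rightarrow> (nat \<Rightarrow> nat \<Rightarrow> nat) \<Rightarrow> bool" where
  "orthogonal_array t k g M \<longleftrightarrow>
     (\<forall>i<g ^ t. \<forall>j<k. M i j < g) \<and>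
     (\<forall>C f. C \<subseteq> {0..<k} \<and> card C = t \<and> (\<forall>j\<in>C. f j < g) \<longrightarrow>
        (\<exists>!i. i < g ^ t \<and> (\<forall>j\<in>C. M i j = f j)))"

definition group_partition :: "nat \<Rightarrow> nat \<Rightarrow> 'a set \<Rightarrow> 'a set set \<Rightarrow> bool" where
  "group_partition n g Q G \<longleftrightarrow>
     finite Q \<and> card Q = n * g \<and> partition_on Q G \<and> card G = n \<and> (\<forall>X\<in>G. card X = g)"

definition transversal_set :: "'a set set \<Rightarrow> 'a set \<Rightarrow> bool" where
  "transversal_set G S \<longleftrightarrow> (\<forall>X\<in>G. card (S \<inter> X) \<le> 1)"

definition H_design :: "nat \<Rightarrow> nat \<Rightarrow> nat \<Rightarrow> nat \<Rightarrow> 'a set \<Rightarrow> 'a set set \<Rightarrow> 'a set set \<Rightarrow> bool" where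
  "H_design n g k t Q G B \<longleftrightarrow>
     group_partition n g Q G \<and>
     (\<forall>b\<in>B. b \<subseteq> Q \<and> card b = k \<and> transversal_set G b) \<and>
     (\<forall>T. T \<subseteq> Q \<and> card T = t \<and> transversal_set G T \<longrightarrow> (\<exists>!b. b \<in> B \<and> T \<subseteq> b))"

definition large_H_set :: "nat \<Rightarrow> nat \<Rightarrow> nat \<Rightarrow> nat \<Rightarrow> 'a set \<Rightarrow> 'a set set \<Rightarrow> 'a set set set \<Rightarrow> bool" where
  "large_H_set n g k t Q G \<B> \<longleftrightarrow>
     group_partition n g Q G \<and>
     \<Union>\<B> = {S. S \<subseteq> Q \<and> card S = k \<and> transversal_set G S} \<and>
     disjoint \<B> \<and>
     (\<forall>B\<in>\<B>. H_design n g k t Q G B)"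

end

theory Submission
  imports Defs "HOL-Library.FuncSet" "HOL-Library.Nat_Bijection"
begin

(* Take the points Q \<times> Z_g with groups {x} \<times> Z_g.  A transversal k-set is the same as a
   k-subset K of Q together with a word w in Z_g^k, read along the increasing enumeration of K.
   Translating the rows of the OA(t,k,g) by the g^(k-t) vectors that vanish on the first t
   columns partitions Z_g^k into g^(k-t) classes, each of which is again an OA(t,k,g).  Every
   k-subset K lies in exactly g^(k-t) systems of the large set; matching these systems
   bijectively with the classes, system i contributes the blocks (K, w) with w in the class
   matched to i.  A transversal t-set lies over a unique block K of system i, and the OA
   property of that class determines w; the matchings make these H-designs partition the
   transversal k-sets. *)

lemma add_mod_eq_iff:
  fixes a b c g :: nat
  assumes "a < g" "b < g" "c < g"
  shows "(a + b) mod g = c \<longleftrightarrow> a = (c + g - b) mod g"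
proof -
  have "(a + b) mod g = (if a + b < g then a + b else a + b - g)"
    using assms by (simp add: mod_if le_mod_geq)
  moreover have "(c + g - b) mod g = (if b \<le> c then c - b else c + g - b)"
    using assms by (simp add: mod_if le_mod_geq)
  ultimately show ?thesis
    using assms by (cases "a + b < g"; cases "b \<le> c") auto
qed

locale OA_translates =
  fixes t k g :: nat and M :: "nat \<Rightarrow> nat \<Rightarrow> nat"
  assumes orthogonal_array: "orthogonal_array t k g M"
    and t_le_k: "t \<le> k" and g_pos: "0 < g"
begin

definition words :: "(nat \<Rightarrow> nat) set" where
  "words = {0..<k} \<rightarrow>\<^sub>E {0..<g}"

definition shifts :: "(nat \<Rightarrow> nat) set" where
  "shifts = {t..<k} \<rightarrow>\<^sub>E {0..<g}"

(* The case split is needed because elements of shifts are undefined, not 0, below t. *)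
definition shifted_row :: "nat \<Rightarrow> (nat \<Rightarrow> nat) \<Rightarrow> nat \<Rightarrow> nat" where
  "shifted_row r v = (\<lambda>j\<in>{0..<k}. if j < t then M r j else (M r j + v j) mod g)"

definition row_of :: "(nat \<Rightarrow> nat) \<Rightarrow> nat" where
  "row_of w = (THE r. r < g ^ t \<and> (\<forall>j\<in>{0..<t}. M r j = w j))"

definition class_of :: "(nat \<Rightarrow> nat) \<Rightarrow> nat \<Rightarrow> nat" where
  "class_of w = (\<lambda>j\<in>{t..<k}. (w j + g - M (row_of w) j) mod g)"

lemma entry_less: "r < g ^ t \<Longrightarrow> j < k \<Longrightarrow> M r j < g"
  using orthogonal_array unfolding orthogonal_array_def by blast

lemma unique_row:
  "C \<subseteq> {0..<k} \<Longrightarrow> card C = t \<Longrightarrow> \<forall>j\<in>C. f j < g \<Longrightarrow> \<exists>!r. r < g ^ t \<and> (\<forall>j\<in>C. M r j = f j)"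
  using orthogonal_array unfolding orthogonal_array_def by blast

lemma row_of:
  assumes "w \<in> words"
  shows "row_of w < g ^ t" "\<forall>j\<in>{0..<t}. M (row_of w) j = w j"
proof -
  have "\<exists>!r. r < g ^ t \<and> (\<forall>j\<in>{0..<t}. M r j = w j)"
    using assms t_le_k by (intro unique_row) (auto simp: words_def PiE_iff)
  from theI'[OF this] show "row_of w < g ^ t" "\<forall>j\<in>{0..<t}. M (row_of w) j = w j"
    unfolding row_of_def by auto
qed

lemma row_of_eq:
  assumes "w \<in> words" "r < g ^ t" "\<forall>j\<in>{0..<t}. M r j = w j"
  shows "row_of w = r"
  using unique_row[of "{0..<t}" w] row_of[OF assms(1)] assms t_le_k
  by (auto simp: words_def PiE_iff)

lemma shifted_row_in_words: "r < g ^ t \<Longrightarrow> shifted_row r v \<in> words"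
  using g_pos entry_less by (auto simp: shifted_row_def words_def)

lemma class_of_in_shifts: "class_of w \<in> shifts"
  using g_pos by (auto simp: class_of_def shifts_def)

lemma words_eqI: "w \<in> words \<Longrightarrow> w' \<in> words \<Longrightarrow> \<forall>j<k. w j = w' j \<Longrightarrow> w = w'"
  unfolding words_def by (rule PiE_ext) auto

lemma card_shifts: "card shifts = g ^ (k - t)"
  by (simp add: shifts_def card_PiE)

lemma row_of_shifted_row:
  assumes "r < g ^ t"
  shows "row_of (shifted_row r v) = r"
  using assms t_le_k
  by (intro row_of_eq shifted_row_in_words) (auto simp: shifted_row_def)

lemma class_of_shifted_row:
  assumes r: "r < g ^ t" and v: "v \<in> shifts"
  shows "class_of (shifted_row r v) = v"
proof
  fix j
  show "class_of (shifted_row r v) j = v j"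
  proof (cases "j \<in> {t..<k}")
    case True
    then have "M r j < g" "v j < g"
      using entry_less[OF r] v by (auto simp: shifts_def)
    moreover have "(M r j + v j) mod g < g"
      using g_pos by simp
    ultimately have "v j = ((M r j + v j) mod g + g - M r j) mod g"
      using add_mod_eq_iff[of "v j" g "M r j" "(M r j + v j) mod g"]
      by (metis add.commute)
    moreover have "shifted_row r v j = (M r j + v j) mod g"
      using True by (simp add: shifted_row_def)
    ultimately show ?thesis
      using True by (simp add: class_of_def row_of_shifted_row[OF r])
  next
    case False
    then show ?thesis
      using PiE_arb[OF v[unfolded shifts_def] False] by (auto simp: class_of_def)
  qed
qed

lemma shifted_row_row_of_class_of:
  assumes w: "w \<in> words"
  shows "shifted_row (row_of w) (class_of w) = w"
proof
  fix j
  show "shifted_row (row_of w) (class_of w) j = w j"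
  proof (cases "j < k")
    case True
    then have "M (row_of w) j < g" "w j < g"
      using entry_less[OF row_of(1)[OF w]] w by (auto simp: words_def)
    with True show ?thesis
      using row_of(2)[OF w] add_mod_eq_iff[of "(w j + g - M (row_of w) j) mod g" g "M (row_of w) j" "w j"]
      by (auto simp: class_of_def shifted_row_def add.commute)
  next
    case False
    then have "j \<notin> {0..<k}"
      by simp
    then show ?thesis
      using PiE_arb[OF w[unfolded words_def]] by (simp add: shifted_row_def)
  qed
qed

lemma unique_word_in_class:
  assumes v: "v \<in> shifts" and C: "C \<subseteq> {0..<k}" "card C = t" and f: "\<forall>j\<in>C. f j < g"
  shows "\<exists>!w. w \<in> words \<and> class_of w = v \<and> (\<forall>j\<in>C. w j = f j)"
proof -
  define f' where "f' j = (if j < t then f j else (f j + g - v j) mod g)" for j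
  have agree_iff: "shifted_row r v j = f j \<longleftrightarrow> M r j = f' j" if r: "r < g ^ t" and j: "j \<in> C" for r j
  proof -
    have "j < k" "f j < g"
      using C f j by auto
    moreover have "M r j < g"
      using entry_less[OF r \<open>j < k\<close>] .
    moreover have "t \<le> j \<Longrightarrow> v j < g"
      using v \<open>j < k\<close> by (auto simp: shifts_def)
    ultimately show ?thesis
      using add_mod_eq_iff[of "M r j" g "v j" "f j"] by (auto simp: shifted_row_def f'_def)
  qed
  have "\<forall>j\<in>C. f' j < g"
    using f g_pos by (auto simp: f'_def)
  then obtain r where r: "r < g ^ t" "\<forall>j\<in>C. M r j = f' j"
    and r_unique: "\<And>r'. r' < g ^ t \<Longrightarrow> \<forall>j\<in>C. M r' j = f' j \<Longrightarrow> r' = r"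
    using unique_row[OF C] by metis
  show ?thesis
  proof (rule ex1I)
    show "shifted_row r v \<in> words \<and> class_of (shifted_row r v) = v \<and> (\<forall>j\<in>C. shifted_row r v j = f j)"
      using r agree_iff shifted_row_in_words class_of_shifted_row[OF _ v] by auto
  next
    fix w
    assume w: "w \<in> words \<and> class_of w = v \<and> (\<forall>j\<in>C. w j = f j)"
    then have w_eq: "w = shifted_row (row_of w) v"
      using shifted_row_row_of_class_of by auto
    have "row_of w = r"
      using r_unique row_of(1) w agree_iff w_eq by (metis (no_types, lifting))
    with w_eq show "w = shifted_row r v"
      by simp
  qed
qed

end

definition block :: "'a::linorder set \<Rightarrow> (nat \<Rightarrow> 'b) \<Rightarrow> ('a \<times> 'b) set" where
  "block K w = (\<lambda>j. (sorted_list_of_set K ! j, w j)) ` {0..<card K}"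

lemma bij_betw_nth_sorted_list_of_set:
  "finite K \<Longrightarrow> bij_betw ((!) (sorted_list_of_set K)) {0..<card K} K"
  by (rule bij_betw_nth) auto

lemma fst_block: "finite K \<Longrightarrow> fst ` block K w = K"
  using bij_betw_nth_sorted_list_of_set[of K]
  by (simp add: block_def image_image bij_betw_def)

lemma inj_on_fst_block: "finite K \<Longrightarrow> inj_on fst (block K w)"
  using bij_betw_nth_sorted_list_of_set[of K]
  by (auto simp: block_def bij_betw_def inj_on_def)

lemma block_eq_block_iff:
  assumes "finite K"
  shows "block K w = block K w' \<longleftrightarrow> (\<forall>j<card K. w j = w' j)"
proof
  let ?e = "(!) (sorted_list_of_set K)"
  assume eq: "block K w = block K w'"
  show "\<forall>j<card K. w j = w' j"
  proof (intro allI impI)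
    fix j
    assume j: "j < card K"
    then have "(?e j, w j) \<in> block K w'"
      unfolding eq[symmetric] by (auto simp: block_def)
    then obtain j' where "j' < card K" "?e j = ?e j'" "w j = w' j'"
      by (auto simp: block_def)
    moreover have "inj_on ?e {0..<card K}"
      using bij_betw_nth_sorted_list_of_set[OF assms] by (rule bij_betw_imp_inj_on)
    ultimately show "w j = w' j"
      using j by (auto dest: inj_onD)
  qed
qed (auto simp: block_def)

lemma card_block: "finite K \<Longrightarrow> card (block K w) = card K"
  using card_image[OF inj_on_fst_block] fst_block by metis

lemma block_subset_Times: "\<forall>j<card K. w j \<in> A \<Longrightarrow> finite K \<Longrightarrow> block K w \<subseteq> K \<times> A"
  using fst_block[of K w] by (force simp: block_def)

lemma block_eq_graph:
  assumes "finite K"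
  shows "block K (\<lambda>j. h (sorted_list_of_set K ! j)) = (\<lambda>x. (x, h x)) ` K"
proof -
  have "block K (\<lambda>j. h (sorted_list_of_set K ! j)) =
      (\<lambda>x. (x, h x)) ` ((!) (sorted_list_of_set K) ` {0..<card K})"
    by (simp add: block_def image_image)
  then show ?thesis
    using bij_betw_imp_surj_on[OF bij_betw_nth_sorted_list_of_set[OF assms]] by simp
qed

lemma graph_subset_block_iff:
  assumes K: "finite K"
  shows "(\<lambda>x. (x, h x)) ` Y \<subseteq> block K w \<longleftrightarrow>
    Y \<subseteq> K \<and> (\<forall>j<card K. sorted_list_of_set K ! j \<in> Y \<longrightarrow> w j = h (sorted_list_of_set K ! j))"
    (is "?lhs \<longleftrightarrow> ?rhs")
proof
  let ?e = "(!) (sorted_list_of_set K)"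
  have bij: "bij_betw ?e {0..<card K} K"
    using bij_betw_nth_sorted_list_of_set[OF K] .
  show "?lhs \<Longrightarrow> ?rhs"
  proof
    assume lhs: ?lhs
    then have "fst ` (\<lambda>x. (x, h x)) ` Y \<subseteq> fst ` block K w"
      by (rule image_mono)
    then show "Y \<subseteq> K"
      by (simp add: image_image fst_block[OF K])
    show "\<forall>j<card K. ?e j \<in> Y \<longrightarrow> w j = h (?e j)"
    proof (intro allI impI)
      fix j
      assume "j < card K" "?e j \<in> Y"
      then have "(?e j, h (?e j)) \<in> block K w" "(?e j, w j) \<in> block K w"
        using lhs by (auto simp: block_def)
      then show "w j = h (?e j)"
        using inj_on_fst_block[OF K, of w] unfolding inj_on_def by fastforce
    qed
  qed
  assume ?rhs
  show ?lhs
  proof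
    fix p
    assume "p \<in> (\<lambda>x. (x, h x)) ` Y"
    then obtain y where p: "p = (y, h y)" "y \<in> Y"
      by blast
    moreover have "y \<in> ?e ` {0..<card K}"
      using \<open>?rhs\<close> bij p(2) by (auto simp: bij_betw_def)
    ultimately obtain j where "j < card K" "y = ?e j"
      by auto
    with p \<open>?rhs\<close> show "p \<in> block K w"
      by (auto simp: block_def)
  qed
qed

lemma inj_on_fst_imp_graph:
  assumes "inj_on fst S"
  shows "S = (\<lambda>x. (x, snd (the_inv_into S fst x))) ` fst ` S"
  using the_inv_into_f_f[OF assms] by (force simp: image_image)

lemma transversal_set_fibres_iff:
  assumes "finite S" "S \<subseteq> Q \<times> A"
  shows "transversal_set ((\<lambda>x. {x} \<times> A) ` Q) S \<longleftrightarrow> inj_on fst S"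
proof -
  have "card (S \<inter> {x} \<times> A) \<le> 1 \<longleftrightarrow> (\<forall>a b. (x, a) \<in> S \<longrightarrow> (x, b) \<in> S \<longrightarrow> a = b)" for x
  proof -
    have "S \<inter> {x} \<times> A = Pair x ` {a. (x, a) \<in> S}"
      using assms(2) by auto
    moreover have "finite {a. (x, a) \<in> S}"
      using finite_imageI[OF assms(1), of snd] by (rule rev_finite_subset) force
    ultimately show ?thesis
      by (simp add: card_image card_le_Suc0_iff_eq)
  qed
  then show ?thesis
    using assms(2) unfolding transversal_set_def inj_on_def by fastforce
qed

lemma card_positions_in_sorted_list_of_set:
  assumes "finite K" "Y \<subseteq> K"
  shows "card {j. j < card K \<and> sorted_list_of_set K ! j \<in> Y} = card Y"
proof -
  let ?e = "(!) (sorted_list_of_set K)"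
  let ?C = "{j. j < card K \<and> ?e j \<in> Y}"
  have bij: "bij_betw ?e {0..<card K} K"
    using assms(1) by (rule bij_betw_nth_sorted_list_of_set)
  have "Y \<subseteq> ?e ` ?C"
  proof
    fix y
    assume "y \<in> Y"
    then obtain j where "j \<in> {0..<card K}" "y = ?e j"
      using assms(2) bij_betw_imp_surj_on[OF bij] by blast
    with \<open>y \<in> Y\<close> show "y \<in> ?e ` ?C"
      by auto
  qed
  then have "bij_betw ?e ?C Y"
    by (intro bij_betw_subset[OF bij]) auto
  then show ?thesis
    by (rule bij_betw_same_card)
qed

locale LH_construction = OA_translates +
  fixes n :: nat and Q :: "nat set" and Bs :: "nat set set list"
    and \<phi> :: "nat set \<Rightarrow> nat \<Rightarrow> nat \<Rightarrow> nat"
  assumes large_set: "large_set_mult t k n (g ^ (k - t)) Q Bs"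
    and class_assignment: "\<And>K. K \<subseteq> Q \<Longrightarrow> card K = k \<Longrightarrow>
      bij_betw (\<phi> K) {i. i < length Bs \<and> K \<in> Bs ! i} shifts"
begin

definition points :: "(nat \<times> nat) set" where
  "points = Q \<times> {0..<g}"

definition groups :: "(nat \<times> nat) set set" where
  "groups = (\<lambda>x. {x} \<times> {0..<g}) ` Q"

definition design :: "nat \<Rightarrow> (nat \<times> nat) set set" where
  "design i = {block K w | K w. K \<in> Bs ! i \<and> w \<in> words \<and> class_of w = \<phi> K i}"

lemma finite_Q: "finite Q" and card_Q: "card Q = n"
  using large_set by (auto simp: large_set_mult_def)

lemma steiner_system_nth: "i < length Bs \<Longrightarrow> steiner_system t k n Q (Bs ! i)"
  using large_set by (auto simp: large_set_mult_def)

lemma system_blockD: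
  assumes "i < length Bs" "K \<in> Bs ! i"
  shows "K \<subseteq> Q" "card K = k" "finite K"
  using steiner_system_nth[OF assms(1)] assms(2) finite_subset[OF _ finite_Q]
  by (auto simp: steiner_system_def)

lemma finite_points: "finite points"
  using finite_Q by (simp add: points_def)

lemma group_partition: "group_partition n g points groups"
proof -
  have inj: "inj_on (\<lambda>x. {x} \<times> {0..<g}) Q"
    using g_pos by (intro inj_onI) auto
  have "{} \<notin> groups"
    using g_pos by (force simp: groups_def)
  then have "partition_on points groups"
    by (intro partition_onI) (auto simp: points_def groups_def disjnt_def)
  moreover have "card groups = n"
    using inj card_Q by (simp add: groups_def card_image)
  moreover have "card points = n * g"
    using card_Q by (simp add: points_def card_cartesian_product)
  moreover have "\<forall>X\<in>groups. card X = g"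
    by (auto simp: groups_def card_cartesian_product)
  ultimately show ?thesis
    unfolding group_partition_def using finite_points by blast
qed

lemma transversal_iff_inj_on_fst:
  "S \<subseteq> points \<Longrightarrow> transversal_set groups S \<longleftrightarrow> inj_on fst S"
  using transversal_set_fibres_iff[of S Q "{0..<g}"] finite_subset[OF _ finite_points]
  by (simp add: points_def groups_def)

lemma block_transversal:
  assumes "K \<subseteq> Q" "card K = k" "w \<in> words"
  shows "block K w \<subseteq> points" "card (block K w) = k" "transversal_set groups (block K w)"
proof -
  have "finite K"
    using assms(1) finite_Q by (rule finite_subset)
  moreover have "\<forall>j<card K. w j \<in> {0..<g}"
    using assms(2,3) by (auto simp: words_def)
  ultimately have "block K w \<subseteq> K \<times> {0..<g}"
    by (intro block_subset_Times)
  then show sub: "block K w \<subseteq> points"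
    using assms(1) by (auto simp: points_def)
  show "card (block K w) = k"
    using card_block[OF \<open>finite K\<close>] assms(2) by simp
  show "transversal_set groups (block K w)"
    using transversal_iff_inj_on_fst[OF sub] inj_on_fst_block[OF \<open>finite K\<close>] by simp
qed

lemma transversal_graph:
  assumes "S \<subseteq> points" "transversal_set groups S"
  obtains Y h where "S = (\<lambda>x. (x, h x)) ` Y" "Y \<subseteq> Q" "card Y = card S" "\<forall>y\<in>Y. h y < g"
proof -
  define h where "h x = snd (the_inv_into S fst x)" for x
  have inj: "inj_on fst S"
    using transversal_iff_inj_on_fst assms by blast
  then have graph: "S = (\<lambda>x. (x, h x)) ` fst ` S"
    unfolding h_def by (rule inj_on_fst_imp_graph)
  have "\<forall>y\<in>fst ` S. h y < g"
  proof
    fix y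
    assume "y \<in> fst ` S"
    then have "the_inv_into S fst y \<in> Q \<times> {0..<g}"
      using the_inv_into_into[OF inj _ assms(1)] by (simp add: points_def)
    then show "h y < g"
      by (simp add: h_def mem_Times_iff)
  qed
  moreover have "fst ` S \<subseteq> Q"
    using assms(1) by (auto simp: points_def)
  ultimately show ?thesis
    using that[OF graph] card_image[OF inj] by blast
qed

lemma transversal_eq_block:
  assumes S: "S \<subseteq> points" "card S = k" "transversal_set groups S"
  obtains K w where "K \<subseteq> Q" "card K = k" "w \<in> words" "S = block K w"
proof -
  obtain K h where graph: "S = (\<lambda>x. (x, h x)) ` K" and K: "K \<subseteq> Q" "card K = k"
    and h: "\<forall>x\<in>K. h x < g"
    using transversal_graph[OF S(1,3)] S(2) by metis
  have "finite K"
    using K(1) finite_Q by (rule finite_subset)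
  let ?e = "(!) (sorted_list_of_set K)"
  define w where "w = (\<lambda>j\<in>{0..<k}. h (?e j))"
  have "block K w = block K (\<lambda>j. h (?e j))"
    using \<open>finite K\<close> K(2) by (simp add: block_eq_block_iff w_def)
  also have "\<dots> = S"
    using block_eq_graph[OF \<open>finite K\<close>] graph[symmetric] by (rule trans)
  finally have "S = block K w" ..
  moreover have "w \<in> words"
    using bij_betw_apply[OF bij_betw_nth_sorted_list_of_set[OF \<open>finite K\<close>]] K(2) h
    by (auto simp: w_def words_def)
  ultimately show ?thesis
    using that K by blast
qed

lemma inj_on_block_words:
  assumes "finite K" "card K = k"
  shows "inj_on (block K) words"
proof (rule inj_onI)
  fix w w'
  assume "w \<in> words" "w' \<in> words" "block K w = block K w'"
  then show "w = w'"
    using block_eq_block_iff[OF assms(1)] assms(2) words_eqI by metis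
qed

lemma union_designs:
  "\<Union>(design ` {0..<length Bs}) = {S. S \<subseteq> points \<and> card S = k \<and> transversal_set groups S}"
proof (intro equalityI subsetI)
  fix S
  assume "S \<in> \<Union>(design ` {0..<length Bs})"
  then obtain i K w where "i < length Bs" "K \<in> Bs ! i" "w \<in> words" "S = block K w"
    by (auto simp: design_def)
  then show "S \<in> {S. S \<subseteq> points \<and> card S = k \<and> transversal_set groups S}"
    using block_transversal system_blockD by auto
next
  fix S
  assume "S \<in> {S. S \<subseteq> points \<and> card S = k \<and> transversal_set groups S}"
  then obtain K w where K: "K \<subseteq> Q" "card K = k" and w: "w \<in> words" "S = block K w"
    using transversal_eq_block by blast
  then have "class_of w \<in> \<phi> K ` {i. i < length Bs \<and> K \<in> Bs ! i}"
    using class_assignment class_of_in_shifts by (simp add: bij_betw_def)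
  then obtain i where i: "i < length Bs" "K \<in> Bs ! i" "class_of w = \<phi> K i"
    by auto
  then have "S \<in> design i"
    unfolding design_def using w by blast
  with i(1) show "S \<in> \<Union>(design ` {0..<length Bs})"
    by auto
qed

lemma design_disjoint:
  assumes i: "i < length Bs" and j: "j < length Bs" and S: "S \<in> design i" "S \<in> design j"
  shows "i = j"
proof -
  obtain K w where Kw: "S = block K w" "K \<in> Bs ! i" "w \<in> words" "class_of w = \<phi> K i"
    using S(1) by (auto simp: design_def)
  obtain K' w' where K'w': "S = block K' w'" "K' \<in> Bs ! j" "w' \<in> words" "class_of w' = \<phi> K' j"
    using S(2) by (auto simp: design_def)
  note K = system_blockD[OF i Kw(2)]
  have "K' = K"
    using fst_block system_blockD(3)[OF j K'w'(2)] K(3) Kw(1) K'w'(1) by metis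
  then have "w = w'"
    using Kw(1,3) K'w'(1,3) by (intro inj_onD[OF inj_on_block_words[OF K(3,2)]]) simp_all
  then have "\<phi> K i = \<phi> K j"
    using Kw(4) K'w'(4) \<open>K' = K\<close> by simp
  then show "i = j"
    using bij_betw_imp_inj_on[OF class_assignment[OF K(1,2)]] i j Kw(2) K'w'(2) \<open>K' = K\<close>
    by (auto dest: inj_onD)
qed

lemma disjoint_designs: "disjoint (design ` {0..<length Bs})"
  using design_disjoint by (fastforce simp: disjoint_def disjnt_def)

lemma design_subset_iff:
  assumes i: "i < length Bs" and K: "K \<in> Bs ! i" "Y \<subseteq> K"
    and K_unique: "\<And>K'. K' \<in> Bs ! i \<Longrightarrow> Y \<subseteq> K' \<Longrightarrow> K' = K"
  shows "b \<in> design i \<and> (\<lambda>x. (x, h x)) ` Y \<subseteq> b \<longleftrightarrow>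
    (\<exists>w. b = block K w \<and> w \<in> words \<and> class_of w = \<phi> K i \<and>
      (\<forall>j<k. sorted_list_of_set K ! j \<in> Y \<longrightarrow> w j = h (sorted_list_of_set K ! j)))"
proof
  assume b: "b \<in> design i \<and> (\<lambda>x. (x, h x)) ` Y \<subseteq> b"
  then obtain K' w where K'w: "b = block K' w" "K' \<in> Bs ! i" "w \<in> words" "class_of w = \<phi> K' i"
    by (auto simp: design_def)
  then have "(\<lambda>x. (x, h x)) ` Y \<subseteq> block K' w"
    using b by simp
  then have "Y \<subseteq> K'"
    by (simp add: graph_subset_block_iff[OF system_blockD(3)[OF i K'w(2)]])
  then have "K' = K"
    using K_unique K'w(2) by blast
  with K'w b have subset: "(\<lambda>x. (x, h x)) ` Y \<subseteq> block K w"
    by simp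
  have "\<forall>j<k. sorted_list_of_set K ! j \<in> Y \<longrightarrow> w j = h (sorted_list_of_set K ! j)"
    using system_blockD(2)[OF i K(1)] subset
    by (simp add: graph_subset_block_iff[OF system_blockD(3)[OF i K(1)]])
  with K'w \<open>K' = K\<close> show "\<exists>w. b = block K w \<and> w \<in> words \<and> class_of w = \<phi> K i \<and>
      (\<forall>j<k. sorted_list_of_set K ! j \<in> Y \<longrightarrow> w j = h (sorted_list_of_set K ! j))"
    by blast
next
  assume "\<exists>w. b = block K w \<and> w \<in> words \<and> class_of w = \<phi> K i \<and>
      (\<forall>j<k. sorted_list_of_set K ! j \<in> Y \<longrightarrow> w j = h (sorted_list_of_set K ! j))"
  then obtain w where w: "b = block K w" "w \<in> words" "class_of w = \<phi> K i"
    "\<forall>j<k. sorted_list_of_set K ! j \<in> Y \<longrightarrow> w j = h (sorted_list_of_set K ! j)"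
    by blast
  have "(\<lambda>x. (x, h x)) ` Y \<subseteq> block K w"
    using system_blockD(2)[OF i K(1)] K(2) w(4)
    by (simp add: graph_subset_block_iff[OF system_blockD(3)[OF i K(1)]])
  then show "b \<in> design i \<and> (\<lambda>x. (x, h x)) ` Y \<subseteq> b"
    unfolding design_def using w K(1) by blast
qed

lemma design_unique_block:
  assumes i: "i < length Bs"
    and T: "T \<subseteq> points" "card T = t" "transversal_set groups T"
  shows "\<exists>!b. b \<in> design i \<and> T \<subseteq> b"
proof -
  obtain Y h where graph: "T = (\<lambda>x. (x, h x)) ` Y" and Y: "Y \<subseteq> Q" "card Y = t"
    and h: "\<forall>y\<in>Y. h y < g"
    using transversal_graph[OF T(1,3)] T(2) by metis
  then obtain K where K: "K \<in> Bs ! i" "Y \<subseteq> K"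
    and K_unique: "\<And>K'. K' \<in> Bs ! i \<Longrightarrow> Y \<subseteq> K' \<Longrightarrow> K' = K"
    using steiner_system_nth[OF i] unfolding steiner_system_def by metis
  note K_props = system_blockD[OF i K(1)]
  let ?e = "(!) (sorted_list_of_set K)"
  define C where "C = {j. j < k \<and> ?e j \<in> Y}"
  have "C \<subseteq> {0..<k}" "card C = t"
    using card_positions_in_sorted_list_of_set[OF K_props(3) K(2)] K_props(2) Y(2)
    by (auto simp: C_def)
  moreover have "\<forall>j\<in>C. h (?e j) < g"
    using h by (simp add: C_def)
  moreover have "\<phi> K i \<in> shifts"
    using class_assignment[OF K_props(1,2)] i K(1) by (auto simp: bij_betw_def)
  ultimately have "\<exists>!w. w \<in> words \<and> class_of w = \<phi> K i \<and> (\<forall>j\<in>C. w j = h (?e j))"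
    by (intro unique_word_in_class)
  then obtain w where w: "w \<in> words" "class_of w = \<phi> K i" "\<forall>j\<in>C. w j = h (?e j)"
    and w_unique: "\<And>w'. w' \<in> words \<Longrightarrow> class_of w' = \<phi> K i \<Longrightarrow> \<forall>j\<in>C. w' j = h (?e j) \<Longrightarrow> w' = w"
    by blast
  show ?thesis
  proof (rule ex1I[of _ "block K w"])
    have "\<forall>j<k. ?e j \<in> Y \<longrightarrow> w j = h (?e j)"
      using w(3) by (simp add: C_def)
    then show "block K w \<in> design i \<and> T \<subseteq> block K w"
      using design_subset_iff[OF i K K_unique, of "block K w" h] w(1,2) graph by blast
  next
    fix b
    assume "b \<in> design i \<and> T \<subseteq> b"
    then have "b \<in> design i \<and> (\<lambda>x. (x, h x)) ` Y \<subseteq> b"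
      by (simp add: graph)
    then obtain w' where "b = block K w'" "w' \<in> words" "class_of w' = \<phi> K i"
      "\<forall>j<k. ?e j \<in> Y \<longrightarrow> w' j = h (?e j)"
      using design_subset_iff[OF i K K_unique, of b h] by blast
    then show "b = block K w"
      using w_unique by (simp add: C_def)
  qed
qed

lemma H_design_design:
  assumes i: "i < length Bs"
  shows "H_design n g k t points groups (design i)"
proof -
  have blocks: "b \<subseteq> points \<and> card b = k \<and> transversal_set groups b" if "b \<in> design i" for b
  proof -
    obtain K w where "b = block K w" "K \<in> Bs ! i" "w \<in> words"
      using \<open>b \<in> design i\<close> by (auto simp: design_def)
    then show ?thesis
      using block_transversal[OF system_blockD(1,2)[OF i \<open>K \<in> Bs ! i\<close>] \<open>w \<in> words\<close>] by simp
  qed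
  show ?thesis
    unfolding H_design_def
    by (intro conjI group_partition ballI allI impI blocks design_unique_block[OF i]) auto
qed

lemma large_H_set_designs: "large_H_set n g k t points groups (design ` {0..<length Bs})"
  unfolding large_H_set_def
  using group_partition union_designs disjoint_designs H_design_design by auto

end

lemma card_image_of_inj: "inj f \<Longrightarrow> card (f ` X) = card X"
  using card_image[OF inj_on_subset[of f UNIV X]] by simp

lemma inj_image_of_inj: "inj f \<Longrightarrow> inj ((`) f)"
  by (simp add: inj_def inj_image_eq_iff)

lemma transversal_set_image:
  assumes "inj f"
  shows "transversal_set ((`) f ` G) (f ` S) \<longleftrightarrow> transversal_set G S"
proof -
  have "card (f ` S \<inter> f ` X) = card (S \<inter> X)" for X
    using card_image_of_inj[OF assms] image_Int[OF assms] by metis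
  then show ?thesis
    by (simp add: transversal_set_def)
qed

lemma transversal_subsets_image:
  assumes f: "inj f"
  shows "{S. S \<subseteq> f ` Q \<and> card S = k \<and> transversal_set ((`) f ` G) S} =
    (`) f ` {S. S \<subseteq> Q \<and> card S = k \<and> transversal_set G S}"
proof (intro equalityI subsetI)
  fix S
  assume S: "S \<in> {S. S \<subseteq> f ` Q \<and> card S = k \<and> transversal_set ((`) f ` G) S}"
  then obtain S0 where "S0 \<subseteq> Q" "S = f ` S0"
    by (auto simp: subset_image_iff)
  with S show "S \<in> (`) f ` {S. S \<subseteq> Q \<and> card S = k \<and> transversal_set G S}"
    by (simp add: card_image_of_inj[OF f] transversal_set_image[OF f])
next
  fix S
  assume "S \<in> (`) f ` {S. S \<subseteq> Q \<and> card S = k \<and> transversal_set G S}"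
  then show "S \<in> {S. S \<subseteq> f ` Q \<and> card S = k \<and> transversal_set ((`) f ` G) S}"
    by (auto simp: card_image_of_inj[OF f] transversal_set_image[OF f])
qed

lemma group_partition_image:
  assumes f: "inj f" and G: "group_partition n g Q G"
  shows "group_partition n g (f ` Q) ((`) f ` G)"
proof -
  have "partition_on Q G"
    using G by (simp add: group_partition_def)
  then have "partition_on (f ` Q) ((`) f ` G - {{}})"
    using partition_on_inj_image inj_on_subset[OF f] by blast
  moreover have "{} \<notin> (`) f ` G"
    using partition_onD3[OF \<open>partition_on Q G\<close>] by auto
  ultimately have "partition_on (f ` Q) ((`) f ` G)"
    by simp
  then show ?thesis
    using G by (simp add: group_partition_def card_image_of_inj[OF f] card_image_of_inj[OF inj_image_of_inj[OF f]])
qed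

lemma H_design_image:
  assumes f: "inj f" and H: "H_design n g k t Q G B"
  shows "H_design n g k t (f ` Q) ((`) f ` G) ((`) f ` B)"
proof -
  have G: "group_partition n g Q G"
    and blocks: "\<And>b. b \<in> B \<Longrightarrow> b \<subseteq> Q \<and> card b = k \<and> transversal_set G b"
    and unique: "\<And>T. T \<in> {S. S \<subseteq> Q \<and> card S = t \<and> transversal_set G S} \<Longrightarrow> \<exists>!b. b \<in> B \<and> T \<subseteq> b"
    using H unfolding H_design_def by blast+
  have unique_image: "\<exists>!b'. b' \<in> (`) f ` B \<and> f ` T \<subseteq> b'"
    if T: "T \<in> {S. S \<subseteq> Q \<and> card S = t \<and> transversal_set G S}" for T
  proof -
    obtain b where "b \<in> B" "T \<subseteq> b" and b_unique: "\<And>b'. b' \<in> B \<Longrightarrow> T \<subseteq> b' \<Longrightarrow> b' = b"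
      using unique[OF T] by blast
    show ?thesis
    proof (rule ex1I[of _ "f ` b"])
      show "f ` b \<in> (`) f ` B \<and> f ` T \<subseteq> f ` b"
        using \<open>b \<in> B\<close> \<open>T \<subseteq> b\<close> by auto
    next
      fix b'
      assume b': "b' \<in> (`) f ` B \<and> f ` T \<subseteq> b'"
      then obtain b0 where "b0 \<in> B" "b' = f ` b0"
        by blast
      moreover from this b' have "T \<subseteq> b0"
        using inj_image_subset_iff[OF f] by simp
      ultimately show "b' = f ` b"
        using b_unique by simp
    qed
  qed
  show ?thesis
  proof (unfold H_design_def, intro conjI)
    show "group_partition n g (f ` Q) ((`) f ` G)"
      using f G by (rule group_partition_image)
    show "\<forall>b'\<in>(`) f ` B. b' \<subseteq> f ` Q \<and> card b' = k \<and> transversal_set ((`) f ` G) b'"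
    proof
      fix b'
      assume "b' \<in> (`) f ` B"
      then obtain b where "b \<in> B" "b' = f ` b"
        by (rule imageE)
      then show "b' \<subseteq> f ` Q \<and> card b' = k \<and> transversal_set ((`) f ` G) b'"
        using blocks[of b] by (simp add: image_mono card_image_of_inj[OF f] transversal_set_image[OF f])
    qed
    show "\<forall>T'. T' \<subseteq> f ` Q \<and> card T' = t \<and> transversal_set ((`) f ` G) T' \<longrightarrow>
        (\<exists>!b'. b' \<in> (`) f ` B \<and> T' \<subseteq> b')"
    proof (intro allI impI)
      fix T'
      assume "T' \<subseteq> f ` Q \<and> card T' = t \<and> transversal_set ((`) f ` G) T'"
      then have "T' \<in> (`) f ` {S. S \<subseteq> Q \<and> card S = t \<and> transversal_set G S}"
        unfolding transversal_subsets_image[OF f, symmetric] by simp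
      then obtain T where "T \<in> {S. S \<subseteq> Q \<and> card S = t \<and> transversal_set G S}" "T' = f ` T"
        by (rule imageE)
      then show "\<exists>!b'. b' \<in> (`) f ` B \<and> T' \<subseteq> b'"
        using unique_image by simp
    qed
  qed
qed

lemma large_H_set_image:
  assumes f: "inj f" and L: "large_H_set n g k t Q G \<B>"
  shows "large_H_set n g k t (f ` Q) ((`) f ` G) ((`) ((`) f) ` \<B>)"
proof -
  have "\<Union>((`) ((`) f) ` \<B>) = (`) f ` \<Union>\<B>"
    by auto
  also have "\<dots> = {S. S \<subseteq> f ` Q \<and> card S = k \<and> transversal_set ((`) f ` G) S}"
    using L by (simp add: large_H_set_def transversal_subsets_image[OF f])
  finally have union: "\<Union>((`) ((`) f) ` \<B>) = \<dots>" .
  have "disjoint ((`) ((`) f) ` \<B>)"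
    using L disjoint_image[OF inj_on_subset[OF inj_image_of_inj[OF f]]]
    by (simp add: large_H_set_def)
  moreover have "group_partition n g (f ` Q) ((`) f ` G)"
    using L group_partition_image[OF f] by (simp add: large_H_set_def)
  moreover have "H_design n g k t (f ` Q) ((`) f ` G) B'" if "B' \<in> (`) ((`) f) ` \<B>" for B'
    using that L H_design_image[OF f] by (auto simp: large_H_set_def)
  ultimately show ?thesis
    unfolding large_H_set_def using union by blast
qed

theorem theorem5:
  fixes n g k t :: nat
  assumes "0 < n" and "0 < g" and "0 < k" and "0 < t" and "t \<le> k"
    and "\<exists>M. orthogonal_array t k g M"
    and "\<exists>(Q :: nat set) Bs. large_set_mult t k n (g ^ (k - t)) Q Bs"
  shows "\<exists>(Q :: nat set) G \<B>. large_H_set n g k t Q G \<B>"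
proof -
  obtain M where M: "orthogonal_array t k g M"
    using assms(6) by blast
  obtain Q :: "nat set" and Bs where LS: "large_set_mult t k n (g ^ (k - t)) Q Bs"
    using assms(7) by blast
  interpret OA_translates t k g M
    using M assms(5,2) by unfold_locales
  have "\<exists>\<phi>\<^sub>K. bij_betw \<phi>\<^sub>K {i. i < length Bs \<and> K \<in> Bs ! i} shifts"
    if "K \<subseteq> Q" "card K = k" for K
  proof (rule finite_same_card_bij)
    show "card {i. i < length Bs \<and> K \<in> Bs ! i} = card shifts"
      using LS that card_shifts by (simp add: large_set_mult_def)
  qed (auto simp: shifts_def intro: finite_PiE)
  then obtain \<phi> where "\<And>K. K \<subseteq> Q \<Longrightarrow> card K = k \<Longrightarrow>
      bij_betw (\<phi> K) {i. i < length Bs \<and> K \<in> Bs ! i} shifts"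
    by metis
  then interpret LH_construction t k g M n Q Bs \<phi>
    using LS by unfold_locales
  have "large_H_set n g k t (prod_encode ` points) ((`) prod_encode ` groups)
      ((`) ((`) prod_encode) ` design ` {0..<length Bs})"
    using inj_prod_encode large_H_set_designs by (rule large_H_set_image)
  then show ?thesis
    by blast
qed

end
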